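(* $\mathrm{1QFA}_{(1/2,1/2)}/Rn=\mathrm{ALL}$.
   Context: $\mathrm{ALL}$ is the collection of all languages. A 1qfa is a one-way measure-many quantum finite automaton (one unitary per scanned symbol, followed at each step by a projection measurement onto accepting/rejecting/non-halting subspaces). For equal-length strings $x,y$, $\genfrac{[}{]}{0pt}{}{x}{y}$ is the two-track string with $x$ on the upper track and $y$ on the lower track. For functions $a,b:\mathbb{N}\to[0,1]$, $\mathrm{1QFA}_{(a(n),b(n))}/Rn$ is the family of languages $L$ over $\Sigma$ for which there exist a 1qfa $M$, an advice alphabet $\Gamma$ and randomized advice $\{D_n\}_{n\in\mathbb{N}}$ ($D_n$ a probability distribution on $\Gamma^n$) such that for every $n$ and $x\in\Sigma^n$: if $x\in L$, then $M$ on $\genfrac{[}{]}{0pt}{}{x}{y}$ with $y\sim D_n$ accepts with probability more than $a(n)$; if $x\notin L$, it rejects with probability more than $b(n)$ (probabilities taken over both $M$ and $D_n$). *)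

theory Defs
  imports "HOL-Probability.Probability"
begin

datatype 'a tsym = LEnd | REnd | Sym 'a

text \<open>A measure-many 1qfa with basis states 0..dim-1, initial basis state q0,
  one (matrix of a) unitary per tape symbol, accepting and rejecting basis states
  (the remaining basis states span the non-halting subspace).\<close>
record 'a qfa =
  dim :: nat
  q0 :: nat
  trans :: "'a tsym \<Rightarrow> nat \<Rightarrow> nat \<Rightarrow> complex"
  accs :: "nat set"
  rejs :: "nat set"

definition unitary_mat :: "nat \<Rightarrow> (nat \<Rightarrow> nat \<Rightarrow> complex) \<Rightarrow> bool" where
  "unitary_mat k U \<longleftrightarrow>
     (\<forall>i<k. \<forall>j<k. (\<Sum>l<k. cnj (U l i) * U l j) = (if i = j then 1 else 0))"

definition wf_qfa :: "'a set \<Rightarrow> 'a qfa \<Rightarrow> bool" where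
  "wf_qfa A M \<longleftrightarrow> q0 M < dim M \<and> accs M \<subseteq> {..<dim M} \<and> rejs M \<subseteq> {..<dim M}
     \<and> accs M \<inter> rejs M = {}
     \<and> unitary_mat (dim M) (trans M LEnd) \<and> unitary_mat (dim M) (trans M REnd)
     \<and> (\<forall>a\<in>A. unitary_mat (dim M) (trans M (Sym a)))"

definition apply_u :: "'a qfa \<Rightarrow> 'a tsym \<Rightarrow> (nat \<Rightarrow> complex) \<Rightarrow> (nat \<Rightarrow> complex)" where
  "apply_u M s \<psi> = (\<lambda>i. if i < dim M then (\<Sum>j<dim M. trans M s i j * \<psi> j) else 0)"

definition proj_non :: "'a qfa \<Rightarrow> (nat \<Rightarrow> complex) \<Rightarrow> (nat \<Rightarrow> complex)" where
  "proj_non M \<psi> = (\<lambda>i. if i < dim M \<and> i \<notin> accs M \<and> i \<notin> rejs M then \<psi> i else 0)"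

text \<open>Probability of accepting / rejecting while reading the remaining tape, starting from
  the (unnormalised) non-halting state vector; after each unitary step the state is measured.\<close>
fun acc_from :: "'a qfa \<Rightarrow> 'a tsym list \<Rightarrow> (nat \<Rightarrow> complex) \<Rightarrow> real" where
  "acc_from M [] \<psi> = 0"
| "acc_from M (s # w) \<psi> =
     (let \<phi> = apply_u M s \<psi> in (\<Sum>q\<in>accs M. (cmod (\<phi> q))\<^sup>2) + acc_from M w (proj_non M \<phi>))"

fun rej_from :: "'a qfa \<Rightarrow> 'a tsym list \<Rightarrow> (nat \<Rightarrow> complex) \<Rightarrow> real" where
  "rej_from M [] \<psi> = 0"
| "rej_from M (s # w) \<psi> =
     (let \<phi> = apply_u M s \<psi> in (\<Sum>q\<in>rejs M. (cmod (\<phi> q))\<^sup>2) + rej_from M w (proj_non M \<phi>))"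

definition init_vec :: "'a qfa \<Rightarrow> nat \<Rightarrow> complex" where
  "init_vec M = (\<lambda>i. if i = q0 M then 1 else 0)"

definition acc_prob :: "'a qfa \<Rightarrow> 'a list \<Rightarrow> real" where
  "acc_prob M w = acc_from M ([LEnd] @ map Sym w @ [REnd]) (init_vec M)"

definition rej_prob :: "'a qfa \<Rightarrow> 'a list \<Rightarrow> real" where
  "rej_prob M w = rej_from M ([LEnd] @ map Sym w @ [REnd]) (init_vec M)"

definition two_track :: "'a list \<Rightarrow> 'g list \<Rightarrow> ('a \<times> 'g) list" where
  "two_track x y = zip x y"

text \<open>L \<in> 1QFA_{(a(n),b(n))}/Rn over alphabet Sigma. The advice alphabet Gamma is
  a finite set of natural-number codes.\<close>
definition in_1QFA_Rn :: "(nat \<Rightarrow> real) \<Rightarrow> (nat \<Rightarrow> real) \<Rightarrow> 'a set \<Rightarrow> 'a list set \<Rightarrow> bool" where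
  "in_1QFA_Rn a b \<Sigma> L \<longleftrightarrow>
    (\<exists>(M :: ('a \<times> nat) qfa) (\<Gamma> :: nat set) (D :: nat \<Rightarrow> nat list pmf).
       finite \<Gamma> \<and> \<Gamma> \<noteq> {} \<and> wf_qfa (\<Sigma> \<times> \<Gamma>) M \<and>
       (\<forall>n. set_pmf (D n) \<subseteq> {y. length y = n \<and> set y \<subseteq> \<Gamma>}) \<and>
       (\<forall>n. \<forall>x. x \<in> lists \<Sigma> \<and> length x = n \<longrightarrow>
          (x \<in> L \<longrightarrow> measure_pmf.expectation (D n) (\<lambda>y. acc_prob M (two_track x y)) > a n) \<and>
          (x \<notin> L \<longrightarrow> measure_pmf.expectation (D n) (\<lambda>y. rej_prob M (two_track x y)) > b n)))"

end

theory Submission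
  imports Defs
begin

text \<open>The advice for inputs of length n is a uniformly random word y of length n together
  with the bit [y \<in> L]. The automaton compares the input x with y letter by letter: at the
  first mismatch it halts, accepting and rejecting with probability 1/2 each, and if x = y it
  outputs the advice bit, which is then the correct answer. As y = x has positive probability,
  the correct answer has probability strictly above 1/2. The bit is carried by the parity of the
  advice letters; the empty input, which receives no advice letter, is settled by the initial
  state.\<close>

definition basis :: "nat \<Rightarrow> nat \<Rightarrow> complex" where
  "basis i = (\<lambda>j. if j = i then 1 else 0)"

definition perm_mat :: "(nat \<Rightarrow> nat) \<Rightarrow> nat \<Rightarrow> nat \<Rightarrow> complex" where
  "perm_mat \<sigma> i j = (if i = \<sigma> j then 1 else 0)"

lemma unitary_perm_mat:
  assumes "\<sigma> permutes {..<k}"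
  shows "unitary_mat k (perm_mat \<sigma>)"
  unfolding unitary_mat_def
proof (intro allI impI)
  fix i j assume "i < k" "j < k"
  have "(\<Sum>l<k. cnj (perm_mat \<sigma> l i) * perm_mat \<sigma> l j) = (\<Sum>l<k. if l = \<sigma> i \<and> \<sigma> i = \<sigma> j then 1 else 0)"
    by (intro sum.cong) (auto simp: perm_mat_def)
  also have "\<dots> = (if \<sigma> i = \<sigma> j then 1 else 0)"
    using permutes_in_image[OF assms, of i] \<open>i < k\<close> by (simp add: sum.If_cases)
  also have "\<dots> = (if i = j then 1 else 0)"
    using permutes_inj[OF assms] by (auto dest: injD)
  finally show "(\<Sum>l<k. cnj (perm_mat \<sigma> l i) * perm_mat \<sigma> l j) = (if i = j then 1 else 0)" .
qed

lemma apply_u_perm_mat_basis: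
  assumes "qfa.trans M s = perm_mat \<sigma>" "\<sigma> permutes {..<dim M}" "j < dim M"
  shows "apply_u M s (basis j) = basis (\<sigma> j)"
  using assms permutes_in_image[OF assms(2), of j]
  by (auto simp: apply_u_def perm_mat_def basis_def fun_eq_iff if_distrib cong: if_cong)

lemma apply_u_basis:
  "j < dim M \<Longrightarrow> apply_u M s (basis j) = (\<lambda>i. if i < dim M then qfa.trans M s i j else 0)"
  by (auto simp: apply_u_def basis_def if_distrib cong: if_cong)

lemma apply_u_zero [simp]: "apply_u M s (\<lambda>_. 0) = (\<lambda>_. 0)"
  by (simp add: apply_u_def fun_eq_iff)

lemma proj_non_zero [simp]: "proj_non M (\<lambda>_. 0) = (\<lambda>_. 0)"
  by (simp add: proj_non_def)

lemma acc_from_zero: "acc_from M w (\<lambda>_. 0) = 0"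
  by (induction w) simp_all

lemma rej_from_zero: "rej_from M w (\<lambda>_. 0) = 0"
  by (induction w) simp_all

lemma
  assumes "apply_u M s \<psi> = basis j" "j < dim M" "j \<notin> accs M" "j \<notin> rejs M"
  shows acc_from_Cons_to_basis: "acc_from M (s # w) \<psi> = acc_from M w (basis j)"
    and rej_from_Cons_to_basis: "rej_from M (s # w) \<psi> = rej_from M w (basis j)"
proof -
  have "proj_non M (basis j) = basis j"
    using assms by (auto simp: proj_non_def basis_def)
  moreover have "(\<Sum>q\<in>accs M. (cmod (basis j q))\<^sup>2) = 0" "(\<Sum>q\<in>rejs M. (cmod (basis j q))\<^sup>2) = 0"
    using assms by (auto intro!: sum.neutral simp: basis_def)
  ultimately show "acc_from M (s # w) \<psi> = acc_from M w (basis j)"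
    "rej_from M (s # w) \<psi> = rej_from M w (basis j)"
    using assms(1) by simp_all
qed

lemma
  assumes "proj_non M (apply_u M s \<psi>) = (\<lambda>_. 0)"
  shows acc_from_Cons_halting: "acc_from M (s # w) \<psi> = (\<Sum>q\<in>accs M. (cmod (apply_u M s \<psi> q))\<^sup>2)"
    and rej_from_Cons_halting: "rej_from M (s # w) \<psi> = (\<Sum>q\<in>rejs M. (cmod (apply_u M s \<psi> q))\<^sup>2)"
  using assms by (simp_all add: acc_from_zero rej_from_zero)

lemma pmf_of_set_expectation_gt:
  fixes f :: "'b \<Rightarrow> real"
  assumes "finite S" "x \<in> S" "f x > c" "\<And>y. y \<in> S \<Longrightarrow> f y \<ge> c"
  shows "measure_pmf.expectation (pmf_of_set S) f > c"
proof -
  have "S \<noteq> {}" "card S > 0"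
    using assms(1,2) card_gt_0_iff by blast+
  have "0 < (\<Sum>y\<in>S. f y - c)"
    using assms by (intro sum_pos2[of S x]) auto
  then have "card S * c < sum f S"
    by (simp add: sum_subtractf)
  then show ?thesis
    using \<open>S \<noteq> {}\<close> \<open>card S > 0\<close> assms(1)
    by (simp add: integral_pmf_of_set pos_less_divide_eq mult.commute)
qed

definition inv_sqrt2 :: complex where
  "inv_sqrt2 = complex_of_real (sqrt (1/2))"

lemma inv_sqrt2_simps [simp]: "cnj inv_sqrt2 = inv_sqrt2" "inv_sqrt2 * inv_sqrt2 = 1/2"
  "(cmod inv_sqrt2)\<^sup>2 = 1/2"
  unfolding inv_sqrt2_def
  by (auto simp: power2_eq_square of_real_mult[symmetric] simp del: of_real_mult)

text \<open>The checker has four basis states: 0 and 3 are non-halting and record the current verdict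
  (reject resp. accept), 1 is accepting and 2 is rejecting. An advice letter g stands for the
  symbol decode (g div 2); an odd g additionally flips the verdict.\<close>

definition verdict_state :: "bool \<Rightarrow> nat" where
  "verdict_state b = (if b then 3 else 0)"

lemma verdict_state_simps [simp]:
  "verdict_state b < 4"
  "Transposition.transpose 0 3 (verdict_state b) = verdict_state (\<not> b)"
  by (simp_all add: verdict_state_def)

definition halt_perm :: "nat \<Rightarrow> nat" where
  "halt_perm = Transposition.transpose 0 2 \<circ> Transposition.transpose 1 3"

lemma halt_perm_permutes: "halt_perm permutes {..<4}"
  unfolding halt_perm_def by (intro permutes_compose permutes_swap_id) simp_all

lemma halt_perm_verdict_state: "halt_perm (verdict_state b) = (if b then 1 else 2)"
  by (simp add: halt_perm_def verdict_state_def)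

text \<open>Sends the verdict states 0 and 3 to (|1> + |2>)/sqrt 2 and (|1> - |2>)/sqrt 2, so that
  the next measurement accepts and rejects with probability 1/2 each; the columns of 1 and 2 only
  complete it to a unitary.\<close>

definition mismatch_mat :: "nat \<Rightarrow> nat \<Rightarrow> complex" where
  "mismatch_mat i j =
     (if i = 0 \<and> j = 1 \<or> i = 3 \<and> j = 2 then 1
      else if i = 1 \<and> (j = 0 \<or> j = 3) \<or> i = 2 \<and> j = 0 then inv_sqrt2
      else if i = 2 \<and> j = 3 then - inv_sqrt2 else 0)"

lemma unitary_mismatch_mat: "unitary_mat 4 mismatch_mat"
proof -
  have "{..<4::nat} = {0, 1, 2, 3}" by auto
  then show ?thesis
    unfolding unitary_mat_def mismatch_mat_def by auto
qed

definition checker_trans :: "(nat \<Rightarrow> 'a) \<Rightarrow> ('a \<times> nat) tsym \<Rightarrow> nat \<Rightarrow> nat \<Rightarrow> complex" where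
  "checker_trans decode s = (case s of
       LEnd \<Rightarrow> perm_mat id
     | REnd \<Rightarrow> perm_mat halt_perm
     | Sym (a, g) \<Rightarrow>
         if decode (g div 2) = a then perm_mat (if odd g then Transposition.transpose 0 3 else id)
         else mismatch_mat)"

definition checker :: "(nat \<Rightarrow> 'a) \<Rightarrow> bool \<Rightarrow> ('a \<times> nat) qfa" where
  "checker decode b = \<lparr>dim = 4, q0 = verdict_state b, trans = checker_trans decode,
     accs = {1}, rejs = {2}\<rparr>"

lemma checker_simps [simp]:
  "dim (checker decode b) = 4" "q0 (checker decode b) = verdict_state b"
  "qfa.trans (checker decode b) = checker_trans decode"
  "accs (checker decode b) = {1}" "rejs (checker decode b) = {2}"
  by (simp_all add: checker_def)

lemma wf_checker: "wf_qfa A (checker decode b)"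
proof -
  have "unitary_mat 4 (checker_trans decode s)" for s
    by (cases s) (auto simp: checker_trans_def unitary_mismatch_mat halt_perm_permutes
        intro!: unitary_perm_mat permutes_swap_id split: prod.split)
  then show ?thesis
    by (simp add: wf_qfa_def verdict_state_def)
qed

lemma checker_perm_step:
  assumes "qfa.trans (checker decode start) s = perm_mat \<sigma>" "\<sigma> permutes {..<4}"
    and "\<sigma> (verdict_state b) = verdict_state b'"
  shows "acc_from (checker decode start) (s # w) (basis (verdict_state b))
           = acc_from (checker decode start) w (basis (verdict_state b'))"
    and "rej_from (checker decode start) (s # w) (basis (verdict_state b))
           = rej_from (checker decode start) w (basis (verdict_state b'))"
proof -
  have step: "apply_u (checker decode start) s (basis (verdict_state b)) = basis (verdict_state b')"
    using apply_u_perm_mat_basis[of "checker decode start" s \<sigma>] assms by simp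
  show "acc_from (checker decode start) (s # w) (basis (verdict_state b))
          = acc_from (checker decode start) w (basis (verdict_state b'))"
    using step by (rule acc_from_Cons_to_basis) (simp_all add: verdict_state_def)
  show "rej_from (checker decode start) (s # w) (basis (verdict_state b))
          = rej_from (checker decode start) w (basis (verdict_state b'))"
    using step by (rule rej_from_Cons_to_basis) (simp_all add: verdict_state_def)
qed

lemma
  shows checker_acc_LEnd: "acc_from (checker decode start) (LEnd # w) (basis (verdict_state b))
           = acc_from (checker decode start) w (basis (verdict_state b))"
    and checker_rej_LEnd: "rej_from (checker decode start) (LEnd # w) (basis (verdict_state b))
           = rej_from (checker decode start) w (basis (verdict_state b))"
  by (rule checker_perm_step[where \<sigma> = id]; simp add: checker_trans_def)+

lemma
  assumes "decode (g div 2) = a"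
  shows checker_acc_match: "acc_from (checker decode start) (Sym (a, g) # w) (basis (verdict_state b))
           = acc_from (checker decode start) w (basis (verdict_state (b \<noteq> odd g)))"
    and checker_rej_match: "rej_from (checker decode start) (Sym (a, g) # w) (basis (verdict_state b))
           = rej_from (checker decode start) w (basis (verdict_state (b \<noteq> odd g)))"
  by (rule checker_perm_step[where \<sigma> = "if odd g then Transposition.transpose 0 3 else id"];
      simp add: assms checker_trans_def permutes_swap_id)+

lemma
  assumes "decode (g div 2) \<noteq> a"
  shows checker_acc_mismatch: "acc_from (checker decode start) (Sym (a, g) # w) (basis (verdict_state b)) = 1/2"
    and checker_rej_mismatch: "rej_from (checker decode start) (Sym (a, g) # w) (basis (verdict_state b)) = 1/2"
proof -
  let ?M = "checker decode start"
  have col: "apply_u ?M (Sym (a, g)) (basis (verdict_state b))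
      = (\<lambda>i. if i < 4 then mismatch_mat i (verdict_state b) else 0)"
    using assms by (simp add: apply_u_basis checker_trans_def cong: if_cong)
  have halt: "proj_non ?M (apply_u ?M (Sym (a, g)) (basis (verdict_state b))) = (\<lambda>_. 0)"
    unfolding col by (auto simp: proj_non_def mismatch_mat_def verdict_state_def)
  show "acc_from ?M (Sym (a, g) # w) (basis (verdict_state b)) = 1/2"
    unfolding acc_from_Cons_halting[OF halt] col by (simp add: mismatch_mat_def verdict_state_def)
  show "rej_from ?M (Sym (a, g) # w) (basis (verdict_state b)) = 1/2"
    unfolding rej_from_Cons_halting[OF halt] col by (simp add: mismatch_mat_def verdict_state_def)
qed

lemma
  shows checker_acc_REnd: "acc_from (checker decode start) [REnd] (basis (verdict_state b)) = of_bool b"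
    and checker_rej_REnd: "rej_from (checker decode start) [REnd] (basis (verdict_state b)) = of_bool (\<not> b)"
proof -
  have "apply_u (checker decode start) REnd (basis (verdict_state b)) = basis (if b then 1 else 2)"
    by (subst apply_u_perm_mat_basis[where \<sigma> = halt_perm])
      (simp_all add: checker_trans_def halt_perm_permutes halt_perm_verdict_state)
  then show "acc_from (checker decode start) [REnd] (basis (verdict_state b)) = of_bool b"
    and "rej_from (checker decode start) [REnd] (basis (verdict_state b)) = of_bool (\<not> b)"
    by (simp_all add: basis_def)
qed

lemma checker_acc_run:
  "length x = length gs \<Longrightarrow>
   acc_from (checker decode start) (map Sym (zip x gs) @ [REnd]) (basis (verdict_state b))
     = (if x = map (\<lambda>g. decode (g div 2)) gs then of_bool (b \<noteq> odd (sum_list gs)) else 1/2)"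
proof (induction x gs arbitrary: b rule: list_induct2)
  case (Cons a x g gs)
  then show ?case
    by (cases "decode (g div 2) = a")
      (auto simp: checker_acc_match checker_acc_mismatch simp del: acc_from.simps)
qed (simp add: checker_acc_REnd del: acc_from.simps)

lemma checker_rej_run:
  "length x = length gs \<Longrightarrow>
   rej_from (checker decode start) (map Sym (zip x gs) @ [REnd]) (basis (verdict_state b))
     = (if x = map (\<lambda>g. decode (g div 2)) gs then of_bool (b = odd (sum_list gs)) else 1/2)"
proof (induction x gs arbitrary: b rule: list_induct2)
  case (Cons a x g gs)
  then show ?case
    by (cases "decode (g div 2) = a")
      (auto simp: checker_rej_match checker_rej_mismatch simp del: rej_from.simps)
qed (simp add: checker_rej_REnd del: rej_from.simps)

definition advice :: "('a \<Rightarrow> nat) \<Rightarrow> bool \<Rightarrow> 'a list \<Rightarrow> nat list" where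
  "advice enc flip y = (case map (\<lambda>a. 2 * enc a) y of [] \<Rightarrow> [] | g # gs \<Rightarrow> (g + of_bool flip) # gs)"

lemma length_advice [simp]: "length (advice enc flip y) = length y"
  by (cases y) (simp_all add: advice_def)

lemma decode_advice:
  "(\<And>a. a \<in> set y \<Longrightarrow> decode (enc a) = a) \<Longrightarrow> map (\<lambda>g. decode (g div 2)) (advice enc flip y) = y"
  by (cases y) (simp_all add: advice_def map_idI)

lemma odd_sum_list_advice: "odd (sum_list (advice enc flip y)) \<longleftrightarrow> flip \<and> y \<noteq> []"
proof -
  have "even (sum_list (map (\<lambda>a. 2 * enc a) ys))" for ys
    by (induction ys) simp_all
  then show ?thesis
    by (cases y) (simp_all add: advice_def)
qed

lemma set_advice_less:
  "(\<And>a. a \<in> set y \<Longrightarrow> enc a < k) \<Longrightarrow> set (advice enc flip y) \<subseteq> {..<2 * k}"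
  by (cases y) (fastforce simp: advice_def)+

lemma
  assumes "length x = length y" "\<And>a. a \<in> set y \<Longrightarrow> decode (enc a) = a"
  shows checker_acc_prob: "acc_prob (checker decode start) (two_track x (advice enc flip y))
      = (if x = y then of_bool (start \<noteq> (flip \<and> y \<noteq> [])) else 1/2)"
    and checker_rej_prob: "rej_prob (checker decode start) (two_track x (advice enc flip y))
      = (if x = y then of_bool (start = (flip \<and> y \<noteq> [])) else 1/2)"
proof -
  have init: "init_vec (checker decode start) = basis (verdict_state start)"
    by (simp add: init_vec_def basis_def fun_eq_iff)
  show "acc_prob (checker decode start) (two_track x (advice enc flip y))
      = (if x = y then of_bool (start \<noteq> (flip \<and> y \<noteq> [])) else 1/2)"
    using assms unfolding acc_prob_def two_track_def init
    by (simp add: checker_acc_LEnd checker_acc_run decode_advice odd_sum_list_advice del: acc_from.simps)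
  show "rej_prob (checker decode start) (two_track x (advice enc flip y))
      = (if x = y then of_bool (start = (flip \<and> y \<noteq> [])) else 1/2)"
    using assms unfolding rej_prob_def two_track_def init
    by (simp add: checker_rej_LEnd checker_rej_run decode_advice odd_sum_list_advice del: rej_from.simps)
qed

text \<open>The parity bit is needed exactly when the verdict for y differs from the initial verdict,
  which is that for the empty word.\<close>

definition advice_pmf :: "('a \<Rightarrow> nat) \<Rightarrow> 'a set \<Rightarrow> 'a list set \<Rightarrow> nat \<Rightarrow> nat list pmf" where
  "advice_pmf enc \<Sigma> L n = map_pmf (\<lambda>y. advice enc (([] \<in> L) \<noteq> (y \<in> L)) y)
     (pmf_of_set {y. set y \<subseteq> \<Sigma> \<and> length y = n})"

lemma words_of_length_nonempty: "\<Sigma> \<noteq> {} \<Longrightarrow> {y. set y \<subseteq> \<Sigma> \<and> length y = n} \<noteq> {}"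
  by (auto intro!: exI[of _ "replicate n (SOME a. a \<in> \<Sigma>)"] some_in_eq[THEN iffD2])

lemma set_pmf_advice_pmf:
  assumes "finite \<Sigma>" "\<Sigma> \<noteq> {}" "\<And>a. a \<in> \<Sigma> \<Longrightarrow> enc a < k"
  shows "set_pmf (advice_pmf enc \<Sigma> L n) \<subseteq> {gs. length gs = n \<and> set gs \<subseteq> {..<2 * k}}"
proof
  fix gs assume gs: "gs \<in> set_pmf (advice_pmf enc \<Sigma> L n)"
  have "set_pmf (pmf_of_set {y. set y \<subseteq> \<Sigma> \<and> length y = n}) = {y. set y \<subseteq> \<Sigma> \<and> length y = n}"
    using assms(1,2) by (intro set_pmf_of_set words_of_length_nonempty finite_lists_length_eq)
  with gs obtain y where "set y \<subseteq> \<Sigma>" "length y = n" "gs = advice enc (([] \<in> L) \<noteq> (y \<in> L)) y"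
    by (auto simp: advice_pmf_def)
  then show "gs \<in> {gs. length gs = n \<and> set gs \<subseteq> {..<2 * k}}"
    using set_advice_less[of y enc k] assms(3) by auto
qed

lemma
  assumes "finite \<Sigma>" "x \<in> lists \<Sigma>" "length x = n" "\<And>a. a \<in> \<Sigma> \<Longrightarrow> decode (enc a) = a"
  shows checker_accepts: "x \<in> L \<Longrightarrow> measure_pmf.expectation (advice_pmf enc \<Sigma> L n)
      (\<lambda>gs. acc_prob (checker decode ([] \<in> L)) (two_track x gs)) > 1/2"
    and checker_rejects: "x \<notin> L \<Longrightarrow> measure_pmf.expectation (advice_pmf enc \<Sigma> L n)
      (\<lambda>gs. rej_prob (checker decode ([] \<in> L)) (two_track x gs)) > 1/2"
proof -
  let ?S = "{y. set y \<subseteq> \<Sigma> \<and> length y = n}"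
  let ?advice = "\<lambda>y. advice enc (([] \<in> L) \<noteq> (y \<in> L)) y"
  have S: "finite ?S" "x \<in> ?S"
    using assms(1-3) by (auto simp: finite_lists_length_eq)
  have acc: "acc_prob (checker decode ([] \<in> L)) (two_track x (?advice y)) = (if x = y then of_bool (y \<in> L) else 1/2)"
    and rej: "rej_prob (checker decode ([] \<in> L)) (two_track x (?advice y)) = (if x = y then of_bool (y \<notin> L) else 1/2)"
    if "y \<in> ?S" for y
  proof -
    have "length x = length y" "\<And>a. a \<in> set y \<Longrightarrow> decode (enc a) = a"
      using that assms(3,4) by auto
    note run = checker_acc_prob[where start = "[] \<in> L" and flip = "([] \<in> L) \<noteq> (y \<in> L)", OF this]
      checker_rej_prob[where start = "[] \<in> L" and flip = "([] \<in> L) \<noteq> (y \<in> L)", OF this]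
    show "acc_prob (checker decode ([] \<in> L)) (two_track x (?advice y))
        = (if x = y then of_bool (y \<in> L) else 1/2)"
      using run(1) by (cases y) auto
    show "rej_prob (checker decode ([] \<in> L)) (two_track x (?advice y))
        = (if x = y then of_bool (y \<notin> L) else 1/2)"
      using run(2) by (cases y) auto
  qed
  show "x \<in> L \<Longrightarrow> measure_pmf.expectation (advice_pmf enc \<Sigma> L n)
      (\<lambda>gs. acc_prob (checker decode ([] \<in> L)) (two_track x gs)) > 1/2"
    unfolding advice_pmf_def integral_map_pmf
    by (rule pmf_of_set_expectation_gt[OF S]) (use acc S(2) in fastforce)+
  show "x \<notin> L \<Longrightarrow> measure_pmf.expectation (advice_pmf enc \<Sigma> L n)
      (\<lambda>gs. rej_prob (checker decode ([] \<in> L)) (two_track x gs)) > 1/2"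
    unfolding advice_pmf_def integral_map_pmf
    by (rule pmf_of_set_expectation_gt[OF S]) (use rej S(2) in fastforce)+
qed

lemma in_1QFA_Rn_half:
  assumes "finite \<Sigma>" "\<Sigma> \<noteq> {}"
  shows "in_1QFA_Rn (\<lambda>_. 1/2) (\<lambda>_. 1/2) \<Sigma> L"
proof -
  obtain decode where decode: "bij_betw decode {..<card \<Sigma>} \<Sigma>"
    using ex_bij_betw_nat_finite assms(1) atLeast0LessThan by metis
  define enc where "enc = inv_into {..<card \<Sigma>} decode"
  have dec: "decode (enc a) = a" and enc: "enc a < card \<Sigma>" if "a \<in> \<Sigma>" for a
    using that decode bij_betw_inv_into_right bij_betwE[OF bij_betw_inv_into[OF decode]]
    unfolding enc_def by auto
  have "{..<2 * card \<Sigma>} \<noteq> {}"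
    using assms by (simp add: card_gt_0_iff lessThan_empty_iff)
  then show ?thesis
    unfolding in_1QFA_Rn_def
    by (intro exI[of _ "checker decode ([] \<in> L)"] exI[of _ "{..<2 * card \<Sigma>}"]
        exI[of _ "advice_pmf enc \<Sigma> L"] conjI allI impI finite_lessThan wf_checker
        set_pmf_advice_pmf[OF assms enc] checker_accepts[OF assms(1) _ _ dec]
        checker_rejects[OF assms(1) _ _ dec])
      auto
qed

theorem lemma5p1:
  fixes \<Sigma> :: "'a set"
  assumes "finite \<Sigma>" and "\<Sigma> \<noteq> {}"
  shows "{L. L \<subseteq> lists \<Sigma> \<and> in_1QFA_Rn (\<lambda>_. 1/2) (\<lambda>_. 1/2) \<Sigma> L} = Pow (lists \<Sigma>)"
  using in_1QFA_Rn_half[OF assms] by auto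

end
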